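(* Let $A\in\mathbb{R}_+^{n\times n}$ be a nonzero circulant matrix and $M=(A/\lambda(A))^{n^2}$ (max-algebraic power). Then $M$ is a Kleene star: $M\otimes M=M$ and $M_{i,i}=1$ for all $i$, equivalently $M=M^*:=I\oplus M\oplus M^2\oplus\dots\oplus M^{n-1}$.
   Context: Max algebra on $\mathbb{R}_+$ with $\oplus=\max$ and ordinary product; $A^t$ is the max-algebraic power and $I$ the identity matrix. A circulant matrix has $A_{i,j}=a_t$ with $t\equiv j-i\pmod n$, $t\in\{0,\dots,n-1\}$. $\lambda(A)$ is the greatest max-algebraic eigenvalue, i.e. the maximum cycle geometric mean; it is nonzero for nonzero circulant $A$. *)

theory Defs
  imports Complex_Main
begin

text \<open>Square matrices of size n over R_+ are represented as functions
  nat => nat => real, only the entries with indices < n being relevant.\<close>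

definition mp_mult :: "nat \<Rightarrow> (nat \<Rightarrow> nat \<Rightarrow> real) \<Rightarrow> (nat \<Rightarrow> nat \<Rightarrow> real) \<Rightarrow> (nat \<Rightarrow> nat \<Rightarrow> real)" where
  "mp_mult n A B = (\<lambda>i j. Max ((\<lambda>k. A i k * B k j) ` {..<n}))"

definition mp_id :: "nat \<Rightarrow> nat \<Rightarrow> real" where
  "mp_id = (\<lambda>i j. if i = j then 1 else 0)"

fun mp_pow :: "nat \<Rightarrow> (nat \<Rightarrow> nat \<Rightarrow> real) \<Rightarrow> nat \<Rightarrow> (nat \<Rightarrow> nat \<Rightarrow> real)" where
  "mp_pow n A 0 = mp_id"
| "mp_pow n A (Suc t) = mp_mult n A (mp_pow n A t)"

definition mp_star :: "nat \<Rightarrow> (nat \<Rightarrow> nat \<Rightarrow> real) \<Rightarrow> (nat \<Rightarrow> nat \<Rightarrow> real)" where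
  "mp_star n M = (\<lambda>i j. Max ((\<lambda>t. mp_pow n M t i j) ` {..<n}))"

definition nonneg_mat :: "nat \<Rightarrow> (nat \<Rightarrow> nat \<Rightarrow> real) \<Rightarrow> bool" where
  "nonneg_mat n A \<longleftrightarrow> (\<forall>i<n. \<forall>j<n. 0 \<le> A i j)"

definition circulant :: "nat \<Rightarrow> (nat \<Rightarrow> nat \<Rightarrow> real) \<Rightarrow> bool" where
  "circulant n A \<longleftrightarrow> (\<exists>a :: nat \<Rightarrow> real. \<forall>i<n. \<forall>j<n. A i j = a ((j + n - i) mod n))"

text \<open>Maximum cycle geometric mean: cycles are given by index lists
  xs = [i_0,...,i_(k-1)] with 1 <= k <= n, the cycle being
  i_0 -> i_1 -> ... -> i_(k-1) -> i_0.\<close>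
definition cycle_weight :: "(nat \<Rightarrow> nat \<Rightarrow> real) \<Rightarrow> nat list \<Rightarrow> real" where
  "cycle_weight A xs = (\<Prod>l<length xs. A (xs ! l) (xs ! ((l + 1) mod length xs)))"

definition mcgm :: "nat \<Rightarrow> (nat \<Rightarrow> nat \<Rightarrow> real) \<Rightarrow> real" where
  "mcgm n A = Max {root (length xs) (cycle_weight A xs) | xs.
       xs \<noteq> [] \<and> length xs \<le> n \<and> set xs \<subseteq> {..<n}}"

end

theory Submission
  imports Defs
begin

text \<open>
  Write the circulant matrix as \<open>A i j = a ((j - i) mod n)\<close>. Its maximum cycle mean is
  \<open>max a\<close> (attained on the cycle \<open>0, s, 2s, \<dots>\<close> for a maximising offset \<open>s\<close>), so in the
  normalised matrix \<open>B = A / \<lambda>(A)\<close> all entries lie in \<open>[0, 1]\<close> and the offset \<open>s\<close> has weight 1.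
  The entry \<open>(i, j)\<close> of the \<open>t\<close>-th power is the best weight of a word of \<open>t\<close> steps leading
  from \<open>i\<close> to \<open>j\<close> modulo \<open>n\<close>. Among \<open>n\<^sup>2 + 1\<close> prefixes of a long word two agree both in length
  and in step sum modulo \<open>n\<close>; cutting out the block between them does not lower the weight.
  Hence any word whose length is a multiple of \<open>n\<close> can be shortened below \<open>n\<^sup>2\<close> and padded
  with copies of \<open>s\<close> back to length \<open>n\<^sup>2\<close>. This makes \<open>M = B\<^sup>n\<^sup>2\<close> transitive
  (\<open>M i k * M k j \<le> M i j\<close>) with unit diagonal, and such a matrix is its own Kleene star.
\<close>

section \<open>Walks in a circulant matrix\<close>

lemma circ_offset_eq:
  fixes n x y s :: nat
  assumes "x < n" "s < n" "y mod n = (x + s) mod n"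
  shows "(y + n - x) mod n = s"
proof -
  have "((y + n - x) + x) mod n = (s + x) mod n"
    using assms by (simp add: add.commute)
  then have "(y + n - x) mod n = s mod n"
    by (simp add: nat_mod_eq_iff)
  then show ?thesis using assms by simp
qed

text \<open>A walk in the circulant digraph is encoded by its list of step offsets: from \<open>i\<close> the
  steps \<open>ts\<close> lead to \<open>(i + sum_list ts) mod n\<close>, and in the circulant matrix with first row
  \<open>b\<close> the walk has weight \<open>word_weight b ts\<close>.\<close>

definition word_weight :: "(nat \<Rightarrow> real) \<Rightarrow> nat list \<Rightarrow> real" where
  "word_weight b ts = prod_list (map b ts)"

definition circ_walk :: "nat \<Rightarrow> nat \<Rightarrow> nat \<Rightarrow> nat list \<Rightarrow> bool" where
  "circ_walk n i j ts \<longleftrightarrow> set ts \<subseteq> {..<n} \<and> (i + sum_list ts) mod n = j"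

lemma word_weight_Nil [simp]: "word_weight b [] = 1"
  by (simp add: word_weight_def)

lemma word_weight_Cons [simp]: "word_weight b (t # ts) = b t * word_weight b ts"
  by (simp add: word_weight_def)

lemma word_weight_append [simp]: "word_weight b (xs @ ys) = word_weight b xs * word_weight b ys"
  by (simp add: word_weight_def)

lemma word_weight_replicate [simp]: "word_weight b (replicate m s) = b s ^ m"
  by (simp add: word_weight_def prod_list_replicate)

lemma word_weight_unit_interval:
  assumes "\<And>t. t \<in> set ts \<Longrightarrow> 0 \<le> b t \<and> b t \<le> 1"
  shows "0 \<le> word_weight b ts \<and> word_weight b ts \<le> 1"
  using assms by (induction ts) (auto intro: mult_le_one)

lemma mp_pow_nonneg:
  assumes "\<And>i k. i < n \<Longrightarrow> k < n \<Longrightarrow> 0 \<le> B i k" "i < n" "j < n"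
  shows "0 \<le> mp_pow n B t i j"
  using assms(2,3)
proof (induction t arbitrary: i j)
  case 0 then show ?case by (simp add: mp_id_def)
next
  case (Suc t)
  have "0 \<le> B i 0 * mp_pow n B t 0 j" using Suc assms(1) by simp
  also have "\<dots> \<le> mp_pow n B (Suc t) i j"
    unfolding mp_pow.simps mp_mult_def using Suc.prems by (intro Max_ge) auto
  finally show ?case .
qed

locale circulant_matrix =
  fixes n :: nat and B :: "nat \<Rightarrow> nat \<Rightarrow> real" and b :: "nat \<Rightarrow> real"
  assumes B_eq: "\<And>i k. i < n \<Longrightarrow> k < n \<Longrightarrow> B i k = b ((k + n - i) mod n)"
begin

lemma word_weight_le_mp_pow:
  assumes b: "\<And>t. t < n \<Longrightarrow> 0 \<le> b t"
    and "i < n" "circ_walk n i j ts"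
  shows "word_weight b ts \<le> mp_pow n B (length ts) i j"
  using assms(2,3)
proof (induction ts arbitrary: i)
  case Nil then show ?case by (simp add: circ_walk_def mp_id_def)
next
  case (Cons u ts)
  define k where "k = (i + u) mod n"
  have k: "k < n" and u: "u < n" using Cons.prems by (auto simp: k_def circ_walk_def)
  have "circ_walk n k j ts" using Cons.prems
    by (auto simp: circ_walk_def k_def mod_add_left_eq add.assoc)
  then have IH: "word_weight b ts \<le> mp_pow n B (length ts) k j" using Cons.IH k by blast
  have "B i k = b u" using B_eq Cons.prems(1) k circ_offset_eq[of i n u k] u by (simp add: k_def)
  then have "word_weight b (u # ts) \<le> B i k * mp_pow n B (length ts) k j"
    using IH b u by (simp add: mult_left_mono)
  also have "\<dots> \<le> mp_mult n B (mp_pow n B (length ts)) i j"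
    unfolding mp_mult_def using k by (intro Max_ge) auto
  finally show ?case by simp
qed

lemma mp_pow_attained:
  assumes "i < n" "j < n"
  shows "mp_pow n B t i j = 0 \<or>
    (\<exists>ts. length ts = t \<and> circ_walk n i j ts \<and> mp_pow n B t i j = word_weight b ts)"
  using assms
proof (induction t arbitrary: i j)
  case 0
  then have "circ_walk n i i []" by (simp add: circ_walk_def)
  then show ?case by (auto simp: mp_id_def)
next
  case (Suc t)
  have "mp_pow n B (Suc t) i j \<in> (\<lambda>k. B i k * mp_pow n B t k j) ` {..<n}"
    unfolding mp_pow.simps mp_mult_def using Suc.prems by (intro Max_in) auto
  then obtain k where k: "k < n" and eq: "mp_pow n B (Suc t) i j = B i k * mp_pow n B t k j"
    by auto
  from Suc.IH[OF k Suc.prems(2)] show ?case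
  proof
    assume "\<exists>ts. length ts = t \<and> circ_walk n k j ts \<and> mp_pow n B t k j = word_weight b ts"
    then obtain ts where
      ts: "length ts = t" "circ_walk n k j ts" "mp_pow n B t k j = word_weight b ts"
      by blast
    define u where "u = (k + n - i) mod n"
    have "(i + u) mod n = (k + n) mod n"
      using Suc.prems(1) by (simp add: u_def mod_add_right_eq)
    then have "circ_walk n i j (u # ts)" using ts(2) k Suc.prems(1)
      by (auto simp: circ_walk_def u_def) (metis add.assoc mod_add_left_eq)
    moreover have "mp_pow n B (Suc t) i j = word_weight b (u # ts)"
      using eq ts(3) B_eq Suc.prems(1) k by (simp add: u_def)
    ultimately show ?case using ts(1) by (metis length_Cons)
  qed (use eq in simp)
qed

end

lemma zero_block_split:
  fixes xs :: "nat list"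
  assumes "0 < n" "n\<^sup>2 \<le> length xs"
  obtains us vs ws where "xs = us @ vs @ ws" "vs \<noteq> []" "n dvd length vs" "n dvd sum_list vs"
proof -
  define f where "f k = (sum_list (take k xs) mod n, k mod n)" for k
  have "f ` {0..n\<^sup>2} \<subseteq> {..<n} \<times> {..<n}" using assms(1) by (auto simp: f_def)
  then have "card (f ` {0..n\<^sup>2}) \<le> card ({..<n} \<times> {..<n})"
    by (intro card_mono) simp_all
  also have "\<dots> < card {0..n\<^sup>2}" by (simp add: power2_eq_square)
  finally have "\<not> inj_on f {0..n\<^sup>2}" using pigeonhole by blast
  then obtain k1 k2 where k: "k1 < k2" "k2 \<le> n\<^sup>2" "f k1 = f k2"
    unfolding inj_on_def by (metis atLeastAtMost_iff linorder_neqE_nat)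
  define vs where "vs = take (k2 - k1) (drop k1 xs)"
  have take_k2: "take k2 xs = take k1 xs @ vs"
    using k unfolding vs_def by (metis le_add_diff_inverse less_imp_le_nat take_add)
  show ?thesis
  proof
    show "xs = take k1 xs @ vs @ drop k2 xs"
      using append_take_drop_id[of k2 xs] unfolding take_k2 by simp
    have "length vs = k2 - k1" using k assms(2) by (simp add: vs_def)
    then show "vs \<noteq> []" "n dvd length vs"
      using k mod_eq_dvd_iff_nat[where m = k2 and n = k1 and q = n] by (auto simp: f_def)
    have "(sum_list (take k1 xs) + sum_list vs) mod n = sum_list (take k1 xs) mod n"
      using k(3) take_k2 by (simp add: f_def)
    then show "n dvd sum_list vs"
      using mod_eq_dvd_iff_nat[where m = "sum_list (take k1 xs) + sum_list vs" and q = n] by simp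
  qed
qed

lemma shorten_walk:
  assumes "0 < n" "\<And>t. t < n \<Longrightarrow> 0 \<le> b t \<and> b t \<le> 1" "set xs \<subseteq> {..<n}"
  shows "\<exists>ys. set ys \<subseteq> {..<n} \<and> length ys < n\<^sup>2
     \<and> length ys mod n = length xs mod n \<and> sum_list ys mod n = sum_list xs mod n
     \<and> word_weight b xs \<le> word_weight b ys"
  using assms(3)
proof (induction "length xs" arbitrary: xs rule: less_induct)
  case less
  have unit: "0 \<le> word_weight b zs \<and> word_weight b zs \<le> 1" if "set zs \<subseteq> {..<n}" for zs
    using that assms(2) by (intro word_weight_unit_interval) auto
  show ?case
  proof (cases "length xs < n\<^sup>2")
    case False
    then obtain us vs ws where split: "xs = us @ vs @ ws" "vs \<noteq> []"
      "n dvd length vs" "n dvd sum_list vs"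
      using zero_block_split[OF assms(1)] by (metis not_less)
    have "length (us @ ws) < length xs" "set (us @ ws) \<subseteq> {..<n}"
      using split less.prems by auto
    then obtain ys where ys: "set ys \<subseteq> {..<n}" "length ys < n\<^sup>2"
      "length ys mod n = length (us @ ws) mod n" "sum_list ys mod n = sum_list (us @ ws) mod n"
      "word_weight b (us @ ws) \<le> word_weight b ys"
      using less.hyps by blast
    have "length xs = length (us @ ws) + length vs" "sum_list xs = sum_list (us @ ws) + sum_list vs"
      using split(1) by simp_all
    then have "length xs mod n = length (us @ ws) mod n"
      "sum_list xs mod n = sum_list (us @ ws) mod n"
      using split(3,4) by (auto elim!: dvdE)
    moreover have "word_weight b xs \<le> word_weight b (us @ ws)"
    proof -
      have "set us \<subseteq> {..<n}" "set vs \<subseteq> {..<n}" "set ws \<subseteq> {..<n}"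
        using less.prems split(1) by auto
      then have "0 \<le> word_weight b us" "0 \<le> word_weight b ws"
        "0 \<le> word_weight b vs" "word_weight b vs \<le> 1"
        using unit by blast+
      then have "word_weight b us * (word_weight b vs * word_weight b ws)
          \<le> word_weight b us * word_weight b ws"
        by (intro mult_left_mono mult_left_le_one_le)
      then show ?thesis using split(1) by simp
    qed
    ultimately show ?thesis using ys by auto
  qed (use less.prems in \<open>intro exI[of _ xs], simp\<close>)
qed

section \<open>Powers of a normalised circulant matrix\<close>

locale normalized_circulant = circulant_matrix +
  fixes s :: nat
  assumes b_unit_interval: "\<And>t. t < n \<Longrightarrow> 0 \<le> b t \<and> b t \<le> 1"
    and s_less: "s < n" and b_s: "b s = 1"
begin

lemma mp_pow_entry_nonneg: "i < n \<Longrightarrow> j < n \<Longrightarrow> 0 \<le> mp_pow n B t i j"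
  using B_eq b_unit_interval by (intro mp_pow_nonneg) auto

lemma pad_walk:
  assumes "set xs \<subseteq> {..<n}" "n dvd length xs" "n dvd t" "n\<^sup>2 \<le> t"
  shows "\<exists>ys. set ys \<subseteq> {..<n} \<and> length ys = t
     \<and> sum_list ys mod n = sum_list xs mod n \<and> word_weight b xs \<le> word_weight b ys"
proof -
  obtain zs where zs: "set zs \<subseteq> {..<n}" "length zs < n\<^sup>2"
    "length zs mod n = length xs mod n" "sum_list zs mod n = sum_list xs mod n"
    "word_weight b xs \<le> word_weight b zs"
    using shorten_walk[where b = b, OF _ b_unit_interval assms(1)] s_less by auto
  define ys where "ys = zs @ replicate (t - length zs) s"
  have "n dvd t - length zs"
    using zs(3) assms(2,3) by (intro dvd_diff_nat) (simp_all add: mod_eq_0_iff_dvd)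
  then have "sum_list ys mod n = sum_list zs mod n"
    by (auto simp: ys_def sum_list_replicate mult.assoc elim!: dvdE)
  moreover have "length ys = t" using zs(2) assms(4) by (simp add: ys_def)
  moreover have "set ys \<subseteq> {..<n}" using zs(1) s_less by (auto simp: ys_def)
  ultimately show ?thesis using zs(4,5) by (intro exI[of _ ys]) (simp add: ys_def b_s)
qed

lemma mp_pow_le_one:
  assumes "i < n" "j < n"
  shows "mp_pow n B t i j \<le> 1"
proof -
  have "word_weight b ts \<le> 1" if "set ts \<subseteq> {..<n}" for ts
    using that b_unit_interval word_weight_unit_interval[of ts b] by auto
  then show ?thesis using mp_pow_attained[OF assms, of t] by (auto simp: circ_walk_def)
qed

lemma mp_pow_diag:
  assumes "n dvd t" "i < n"
  shows "mp_pow n B t i i = 1"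
proof -
  have "circ_walk n i i (replicate t s)"
    using assms s_less by (auto simp: circ_walk_def sum_list_replicate mult.assoc elim!: dvdE)
  from word_weight_le_mp_pow[OF _ assms(2) this] b_unit_interval
  have "1 \<le> mp_pow n B t i i" by (simp add: b_s)
  with mp_pow_le_one[where t = t, OF assms(2,2)] show ?thesis by simp
qed

lemma mp_pow_mult_le:
  assumes t: "n dvd t" "n\<^sup>2 \<le> t" and ikj: "i < n" "k < n" "j < n"
  shows "mp_pow n B t i k * mp_pow n B t k j \<le> mp_pow n B t i j"
proof (cases "mp_pow n B t i k = 0 \<or> mp_pow n B t k j = 0")
  case True then show ?thesis using mp_pow_entry_nonneg ikj by auto
next
  case False
  then obtain ts1 ts2 where
    ts1: "length ts1 = t" "circ_walk n i k ts1" "mp_pow n B t i k = word_weight b ts1" and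
    ts2: "length ts2 = t" "circ_walk n k j ts2" "mp_pow n B t k j = word_weight b ts2"
    using mp_pow_attained[OF ikj(1,2)] mp_pow_attained[OF ikj(2,3)] by blast
  have "set (ts1 @ ts2) \<subseteq> {..<n}" "n dvd length (ts1 @ ts2)"
    using ts1 ts2 t by (auto simp: circ_walk_def)
  then obtain ys where ys: "set ys \<subseteq> {..<n}" "length ys = t"
    "sum_list ys mod n = sum_list (ts1 @ ts2) mod n"
    "word_weight b (ts1 @ ts2) \<le> word_weight b ys"
    using pad_walk t by blast
  have "(i + sum_list ys) mod n = (i + sum_list (ts1 @ ts2)) mod n"
    using ys(3) by (metis mod_add_right_eq)
  also have "\<dots> = ((i + sum_list ts1) mod n + sum_list ts2) mod n"
    by (simp add: add.assoc mod_add_left_eq)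
  finally have "circ_walk n i j ys" using ys(1) ts1(2) ts2(2) by (simp add: circ_walk_def)
  from word_weight_le_mp_pow[OF _ ikj(1) this] b_unit_interval
  have "word_weight b ys \<le> mp_pow n B t i j" using ys(2) by simp
  then show ?thesis using ts1(3) ts2(3) ys(4) by simp
qed

end

section \<open>Transitive matrices with unit diagonal\<close>

context
  fixes n :: nat and M :: "nat \<Rightarrow> nat \<Rightarrow> real"
  assumes diag: "\<And>i. i < n \<Longrightarrow> M i i = 1"
    and transitive: "\<And>i k j. i < n \<Longrightarrow> k < n \<Longrightarrow> j < n \<Longrightarrow> M i k * M k j \<le> M i j"
begin

lemma mp_mult_idem_if_transitive:
  assumes "i < n" "j < n"
  shows "mp_mult n M M i j = M i j"
proof (rule antisym)
  show "mp_mult n M M i j \<le> M i j"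
    unfolding mp_mult_def using assms transitive by (intro Max.boundedI) auto
  have "M i j * M j j \<le> mp_mult n M M i j"
    unfolding mp_mult_def using assms by (intro Max_ge) auto
  then show "M i j \<le> mp_mult n M M i j" using diag assms by simp
qed

lemma mp_pow_le_if_transitive:
  assumes nonneg: "\<And>i j. i < n \<Longrightarrow> j < n \<Longrightarrow> 0 \<le> M i j" and "i < n" "j < n"
  shows "mp_pow n M t i j \<le> M i j"
  using assms(2,3)
proof (induction t arbitrary: i j)
  case 0 then show ?case using diag nonneg by (auto simp: mp_id_def)
next
  case (Suc t)
  have "M i k * mp_pow n M t k j \<le> M i j" if "k < n" for k
  proof -
    have "M i k * mp_pow n M t k j \<le> M i k * M k j"
      using Suc that nonneg by (intro mult_left_mono) auto
    also have "\<dots> \<le> M i j" using transitive Suc.prems that by blast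
    finally show ?thesis .
  qed
  then show ?case unfolding mp_pow.simps mp_mult_def using Suc.prems by (intro Max.boundedI) auto
qed

lemma mp_star_eq_if_transitive:
  assumes nonneg: "\<And>i j. i < n \<Longrightarrow> j < n \<Longrightarrow> 0 \<le> M i j" and "i < n" "j < n"
  shows "mp_star n M i j = M i j"
proof (rule antisym)
  show "mp_star n M i j \<le> M i j"
    unfolding mp_star_def using assms mp_pow_le_if_transitive[OF nonneg]
    by (intro Max.boundedI) auto
  have le_star: "mp_pow n M t i j \<le> mp_star n M i j" if "t < n" for t
    unfolding mp_star_def using that by (intro Max_ge) auto
  have "M i j * mp_id j j \<le> mp_mult n M mp_id i j"
    unfolding mp_mult_def using assms by (intro Max_ge) auto
  then have "M i j \<le> mp_pow n M (Suc 0) i j" by (simp add: mp_id_def)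
  moreover have "M i i = mp_pow n M 0 i i" using diag assms by (simp add: mp_id_def)
  ultimately show "M i j \<le> mp_star n M i j"
  proof (cases "i = j")
    case False
    then have "Suc 0 < n" using assms by linarith
    then show ?thesis using le_star[of "Suc 0"] \<open>M i j \<le> mp_pow n M (Suc 0) i j\<close> by linarith
  qed (use le_star[of 0] assms in simp)
qed

end

section \<open>The maximum cycle mean of a circulant matrix\<close>

lemma root_cycle_weight_le:
  assumes "\<And>i j. i < n \<Longrightarrow> j < n \<Longrightarrow> 0 \<le> A i j \<and> A i j \<le> m"
    and "xs \<noteq> []" "set xs \<subseteq> {..<n}"
  shows "root (length xs) (cycle_weight A xs) \<le> m"
proof -
  have xs_less: "xs ! l < n" if "l < length xs" for l using assms(3) that nth_mem by blast
  have "0 \<le> m"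
    using assms(1)[OF xs_less xs_less] assms(2) by (meson length_greater_0_conv order_trans)
  have "cycle_weight A xs \<le> (\<Prod>l<length xs. m)"
    unfolding cycle_weight_def using assms(1,2) xs_less by (intro prod_mono) simp
  then have "root (length xs) (cycle_weight A xs) \<le> root (length xs) (m ^ length xs)"
    using assms(2) by (simp add: real_root_le_iff)
  also have "\<dots> = m" using \<open>0 \<le> m\<close> assms(2) by (simp add: real_root_power_cancel)
  finally show ?thesis .
qed

lemma cycle_weight_circulant_offset:
  assumes A: "\<And>i j. i < n \<Longrightarrow> j < n \<Longrightarrow> A i j = a ((j + n - i) mod n)" and "s < n"
  shows "cycle_weight A (map (\<lambda>l. l * s mod n) [0..<n]) = a s ^ n"
proof -
  have "A (l * s mod n) (((l + 1) mod n) * s mod n) = a s" if "l < n" for l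
  proof -
    have "((l + 1) mod n) * s mod n = (l * s + s) mod n"
      using mod_mult_left_eq[of "l + 1" n s] by (simp add: algebra_simps)
    also have "\<dots> = (l * s mod n + s) mod n"
      by (simp add: mod_add_left_eq)
    finally have "((l + 1) mod n) * s mod n = (l * s mod n + s) mod n" .
    then have "(((l + 1) mod n) * s mod n + n - l * s mod n) mod n = s"
      using that \<open>s < n\<close> by (intro circ_offset_eq) auto
    then show ?thesis using A that by simp
  qed
  then show ?thesis by (simp add: cycle_weight_def)
qed

lemma mcgm_circulant:
  assumes "0 < n" and a_nonneg: "\<And>t. t < n \<Longrightarrow> 0 \<le> a t"
    and A: "\<And>i j. i < n \<Longrightarrow> j < n \<Longrightarrow> A i j = a ((j + n - i) mod n)"
  shows "mcgm n A = Max (a ` {..<n})"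
proof -
  let ?S = "{root (length xs) (cycle_weight A xs) |xs. xs \<noteq> [] \<and> length xs \<le> n \<and> set xs \<subseteq> {..<n}}"
  have "finite {xs. xs \<noteq> [] \<and> length xs \<le> n \<and> set xs \<subseteq> {..<n}}"
    by (rule finite_subset[OF _ finite_lists_length_le[of "{..<n}" n]]) auto
  then have "finite ?S" by (rule finite_image_set)
  moreover have "y \<le> Max (a ` {..<n})" if "y \<in> ?S" for y
    using that A a_nonneg root_cycle_weight_le[of n A] by auto
  moreover have "Max (a ` {..<n}) \<in> ?S"
  proof -
    have "Max (a ` {..<n}) \<in> a ` {..<n}" using \<open>0 < n\<close> by (intro Max_in) auto
    then obtain s where s: "s < n" "Max (a ` {..<n}) = a s" by auto
    let ?xs = "map (\<lambda>l. l * s mod n) [0..<n]"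
    have "root (length ?xs) (cycle_weight A ?xs) = a s"
      using cycle_weight_circulant_offset[where A = A and a = a, OF A s(1)]
        \<open>0 < n\<close> a_nonneg[OF s(1)]
      by (simp add: real_root_power_cancel)
    moreover have "?xs \<noteq> [] \<and> length ?xs \<le> n \<and> set ?xs \<subseteq> {..<n}" using \<open>0 < n\<close> by auto
    ultimately show ?thesis unfolding s(2) by (intro CollectI exI[of _ ?xs]) simp
  qed
  ultimately show ?thesis unfolding mcgm_def by (rule Max_eqI)
qed

lemma normalized_circulant_div_mcgm:
  assumes "nonneg_mat n A" "circulant n A" "\<exists>i<n. \<exists>j<n. A i j \<noteq> 0"
  obtains a s where "normalized_circulant n (\<lambda>i j. A i j / mcgm n A) (\<lambda>t. a t / mcgm n A) s"
proof -
  obtain i0 j0 where ij0: "i0 < n" "j0 < n" "A i0 j0 \<noteq> 0" using assms(3) by blast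
  then have "0 < n" by simp
  obtain a where a: "\<And>i j. i < n \<Longrightarrow> j < n \<Longrightarrow> A i j = a ((j + n - i) mod n)"
    using assms(2) unfolding circulant_def by blast
  have a_nonneg: "0 \<le> a t" if "t < n" for t
  proof -
    have "0 \<le> A 0 t" using assms(1) \<open>0 < n\<close> that unfolding nonneg_mat_def by blast
    then show ?thesis using a[of 0 t] that by simp
  qed
  have \<lambda>: "mcgm n A = Max (a ` {..<n})"
    by (rule mcgm_circulant[where A = A and a = a, OF \<open>0 < n\<close> a_nonneg a])
  have "Max (a ` {..<n}) \<in> a ` {..<n}" using \<open>0 < n\<close> by (intro Max_in) auto
  then obtain s where s: "s < n" "a s = mcgm n A" using \<lambda> by auto
  have a_le: "a t \<le> mcgm n A" if "t < n" for t using that \<lambda> by simp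
  have "0 < mcgm n A"
    using ij0 a_le[of "(j0 + n - i0) mod n"] assms(1) a[OF ij0(1,2)] \<open>0 < n\<close>
    by (force simp: nonneg_mat_def)
  then have "normalized_circulant n (\<lambda>i j. A i j / mcgm n A) (\<lambda>t. a t / mcgm n A) s"
    using a a_nonneg a_le s by unfold_locales auto
  then show ?thesis by (rule that)
qed

theorem lemma5:
  fixes n :: nat and A :: "nat \<Rightarrow> nat \<Rightarrow> real"
  assumes "nonneg_mat n A"
    and "circulant n A"
    and "\<exists>i<n. \<exists>j<n. A i j \<noteq> 0"
  defines "M \<equiv> mp_pow n (\<lambda>i j. A i j / mcgm n A) (n ^ 2)"
  shows "(\<forall>i<n. \<forall>j<n. mp_mult n M M i j = M i j)
       \<and> (\<forall>i<n. M i i = 1)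
       \<and> (\<forall>i<n. \<forall>j<n. mp_star n M i j = M i j)"
proof -
  obtain a s where "normalized_circulant n (\<lambda>i j. A i j / mcgm n A) (\<lambda>t. a t / mcgm n A) s"
    using normalized_circulant_div_mcgm[OF assms(1-3)] .
  then interpret normalized_circulant n "\<lambda>i j. A i j / mcgm n A" "\<lambda>t. a t / mcgm n A" s .
  have "n dvd n\<^sup>2" by (simp add: power2_eq_square)
  then have diag: "M i i = 1" and transitive: "M i k * M k j \<le> M i j"
    if "i < n" "k < n" "j < n" for i k j
    using mp_pow_diag mp_pow_mult_le that unfolding M_def by auto
  have "0 \<le> M i j" if "i < n" "j < n" for i j
    using mp_pow_entry_nonneg[OF that] unfolding M_def .
  then show ?thesis
    using mp_mult_idem_if_transitive[of n M] mp_star_eq_if_transitive[of n M] diag transitive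
    by blast
qed

end
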